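(* Let $\mathbb{F}_q$ be any finite field, $S\subseteq\mathbb{F}_q\setminus\{0\}$ any symmetric set, $G=\Gamma(\mathbb{F}_q,S)$, and $\overline{G}=\Gamma(\mathbb{F}_q,\overline S)$ its complement, where $\overline S=(\mathbb{F}_q\setminus\{0\})\setminus S$. Define $\rho_{\mathrm{lin}}(G)=q^{1-\frac{|S|}{q-1}}$ and $\rho_{\mathrm{lin}}(\overline G)=q^{1-\frac{|\overline S|}{q-1}}$. Then exactly one of the following holds: (a) $\rho_{\mathrm{lin}}(G)=\vartheta(G)$ and $\rho_{\mathrm{lin}}(\overline{G})=\vartheta(\overline{G})$; (b) for one of the graphs $H\in\{G,\overline G\}$, $\rho_{\mathrm{lin}}(H)<\vartheta(H)$.
   Context: For a symmetric set $S\subseteq\mathbb{F}_q\setminus\{0\}$ ($S=-S$), the Cayley graph $\Gamma(\mathbb{F}_q,S)$ has vertex set $\mathbb{F}_q$, with $u\sim v$ iff $u-v\in S$. $\vartheta(\cdot)$ denotes the Lovász theta function of a graph. The quantity $\rho_{\mathrm{lin}}(\Gamma(\mathbb{F}_q,S))=q^{1-|S|/(q-1)}$ is an upper bound on the linear Shannon capacity $\Theta_{\mathrm{lin}}(\Gamma(\mathbb{F}_q,S))=\sup_k\alpha_{\mathrm{lin}}(G^k)^{1/k}$, where $\alpha_{\mathrm{lin}}(G^k)$ is the largest size of an independent set in the $k$-fold strong product $G^k$ that is a linear subspace of $\mathbb{F}_q^k$. *)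

theory Defs
  imports Complex_Main
begin

definition cayley_adj :: "'a::ab_group_add set \<Rightarrow> 'a \<Rightarrow> 'a \<Rightarrow> bool" where
  "cayley_adj S u v \<longleftrightarrow> u - v \<in> S"

definition lovasz_theta :: "('v::finite \<Rightarrow> 'v \<Rightarrow> bool) \<Rightarrow> real" where
  "lovasz_theta E = Sup {(\<Sum>i\<in>UNIV. \<Sum>j\<in>UNIV. B i j) | B :: 'v \<Rightarrow> 'v \<Rightarrow> real.
      (\<forall>i j. B i j = B j i) \<and>
      (\<forall>x :: 'v \<Rightarrow> real. 0 \<le> (\<Sum>i\<in>UNIV. \<Sum>j\<in>UNIV. x i * B i j * x j)) \<and>
      (\<Sum>i\<in>UNIV. B i i) = 1 \<and>
      (\<forall>i j. E i j \<longrightarrow> B i j = 0)}"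

definition rho_lin :: "'a::{field,finite} set \<Rightarrow> real" where
  "rho_lin S = real (card (UNIV :: 'a set)) powr (1 - real (card S) / (real (card (UNIV :: 'a set)) - 1))"

end

theory Submission imports Defs "HOL-Analysis.Analysis" begin

text \<open>Since \<open>|S| + |S\<^sup>c| = q - 1\<close>, the two linear bounds multiply to exactly
  \<open>\<rho>(G) \<rho>(G\<^sup>c) = q\<close>, whereas Lov\'asz's inequality gives \<open>\<vartheta>(G) \<vartheta>(G\<^sup>c) \<ge> q\<close>.
  Hence if neither \<open>\<rho>\<close> is strictly below the corresponding \<open>\<vartheta>\<close>, both products
  agree and all inequalities are equalities. Lov\'asz's inequality needs an upper
  certificate for \<open>\<vartheta>(G)\<close>, since \<open>\<vartheta>\<close> is given as a maximum; it is obtained by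
  separating the convex hull of the rank-one "moments" of unit vectors from the ray of
  objective values above \<open>\<vartheta>(G)\<close>. Subtracted from a multiple of the identity, the
  certificate becomes a feasible matrix for the complement.\<close>

definition quad_form :: "('v::finite \<Rightarrow> 'v \<Rightarrow> real) \<Rightarrow> ('v \<Rightarrow> real) \<Rightarrow> real" where
  "quad_form B x = (\<Sum>i\<in>UNIV. \<Sum>j\<in>UNIV. x i * B i j * x j)"

definition entry_sum :: "('v::finite \<Rightarrow> 'v \<Rightarrow> real) \<Rightarrow> real" where
  "entry_sum B = (\<Sum>i\<in>UNIV. \<Sum>j\<in>UNIV. B i j)"

definition theta_feasible :: "('v::finite \<Rightarrow> 'v \<Rightarrow> bool) \<Rightarrow> ('v \<Rightarrow> 'v \<Rightarrow> real) \<Rightarrow> bool" where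
  "theta_feasible E B \<longleftrightarrow> (\<forall>i j. B i j = B j i) \<and> (\<forall>x. 0 \<le> quad_form B x) \<and>
     (\<Sum>i\<in>UNIV. B i i) = 1 \<and> (\<forall>i j. E i j \<longrightarrow> B i j = 0)"

lemma lovasz_theta_eq_Sup: "lovasz_theta E = Sup (entry_sum ` {B. theta_feasible E B})"
  unfolding lovasz_theta_def theta_feasible_def quad_form_def entry_sum_def
  by (rule arg_cong[where f = Sup]) auto

lemma quad_form_indicator_diff:
  fixes B :: "'v::finite \<Rightarrow> 'v \<Rightarrow> real"
  assumes "i \<noteq> j"
  shows "quad_form B (\<lambda>k. (if k = i then 1 else 0) - (if k = j then 1 else 0))
           = B i i - B i j - B j i + B j j"
proof -
  have sum_if: "(\<Sum>k\<in>UNIV. if P then f k else 0) = (if P then sum f UNIV else 0)"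
    for P and f :: "'v \<Rightarrow> real" by auto
  from assms show ?thesis
    by (simp add: quad_form_def left_diff_distrib right_diff_distrib sum_subtractf sum_if
        if_distrib[where f = "\<lambda>x. x * _"] if_distrib[where f = "\<lambda>x. _ * x"] cong: if_cong)
qed

lemma quad_form_scale:
  "quad_form B (\<lambda>i. c * x i) = c\<^sup>2 * quad_form B x"
  by (simp add: quad_form_def sum_distrib_left power2_eq_square algebra_simps)

lemma quad_form_symmetrize:
  "quad_form (\<lambda>i j. (A i j + A j i) / 2) x = quad_form A x"
proof -
  have "quad_form (\<lambda>i j. A j i) x = quad_form A x"
    unfolding quad_form_def by (subst sum.swap) (simp add: algebra_simps)
  then show ?thesis
    by (simp add: quad_form_def add_divide_distrib distrib_left distrib_right sum.distrib
        flip: sum_divide_distrib)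
qed

lemma quad_form_identity_minus:
  "quad_form (\<lambda>i j. ((if i = j then t else 0) - A i j) / r) x
     = (t * (\<Sum>i\<in>UNIV. x i * x i) - quad_form A x) / r"
  by (simp add: quad_form_def sum_subtractf diff_divide_distrib right_diff_distrib
      left_diff_distrib if_distrib[where f = "\<lambda>z. _ * z"] sum_distrib_left
      mult.commute mult.left_commute cong: if_cong flip: sum_divide_distrib)

lemma entry_sum_eq_quad_form_ones: "entry_sum B = quad_form B (\<lambda>_. 1)"
  by (simp add: entry_sum_def quad_form_def)

lemma sum_square_eq_double_sum:
  fixes f :: "'v \<Rightarrow> real"
  shows "(\<Sum>i\<in>A. f i)\<^sup>2 = (\<Sum>i\<in>A. \<Sum>j\<in>A. f i * f j)"
  by (simp add: power2_eq_square sum_product)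

lemma entry_sum_le_card:
  fixes B :: "'v::finite \<Rightarrow> 'v \<Rightarrow> real"
  assumes "theta_feasible E B"
  shows "entry_sum B \<le> real CARD('v)"
proof -
  have psd: "\<And>x. 0 \<le> quad_form B x" and sym: "\<And>i j. B i j = B j i"
    and trace: "(\<Sum>i\<in>UNIV. B i i) = 1"
    using assms by (auto simp: theta_feasible_def)
  have entry_le: "2 * B i j \<le> B i i + B j j" for i j
  proof (cases "i = j")
    case False
    then show ?thesis
      using psd[of "\<lambda>k. (if k = i then 1 else 0) - (if k = j then 1 else 0)"]
        quad_form_indicator_diff[OF False, of B] sym[of i j] by linarith
  qed simp
  have "2 * entry_sum B = (\<Sum>i\<in>UNIV. \<Sum>j\<in>UNIV. 2 * B i j)"
    by (simp add: entry_sum_def sum_distrib_left)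
  also have "\<dots> \<le> (\<Sum>i\<in>UNIV. \<Sum>j\<in>UNIV. B i i + B j j)"
    by (intro sum_mono entry_le)
  also have "\<dots> = 2 * real CARD('v)"
    by (simp add: sum.distrib trace sum.swap[of "\<lambda>i j. B j j"] flip: sum_distrib_left)
  finally show ?thesis by simp
qed

lemma entry_sum_le_lovasz_theta:
  assumes "theta_feasible E B"
  shows "entry_sum B \<le> lovasz_theta E"
proof -
  have "bdd_above (entry_sum ` {B. theta_feasible E B})"
    using entry_sum_le_card by (intro bdd_aboveI2) blast
  with assms show ?thesis
    unfolding lovasz_theta_eq_Sup by (intro cSup_upper) auto
qed

lemma lovasz_theta_ge_1:
  fixes E :: "'v::finite \<Rightarrow> 'v \<Rightarrow> bool"
  assumes "\<forall>i. \<not> E i i"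
  shows "1 \<le> lovasz_theta E"
proof -
  define B :: "'v \<Rightarrow> 'v \<Rightarrow> real" where
    "B i j = (if i = j then 1 / real CARD('v) else 0)" for i j
  have "quad_form B x = (\<Sum>i\<in>UNIV. x i * x i) / real CARD('v)" for x
    by (simp add: quad_form_def B_def sum_divide_distrib if_distrib[where f = "\<lambda>y. _ * y"]
        if_distrib[where f = "\<lambda>y. y * _"] cong: if_cong)
  then have "theta_feasible E B"
    unfolding theta_feasible_def using assms
    by (auto simp: B_def intro!: divide_nonneg_nonneg sum_nonneg)
  moreover have "entry_sum B = 1"
    by (simp add: entry_sum_def B_def)
  ultimately show ?thesis
    using entry_sum_le_lovasz_theta by metis
qed

subsection \<open>A dual certificate for the theta function\<close>

lemma theta_feasible_convex_combination:
  fixes x :: "'w \<Rightarrow> 'v::finite \<Rightarrow> real"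
  assumes "finite W" and u_nonneg: "\<forall>w\<in>W. 0 \<le> u w" and u_sum: "sum u W = 1"
    and unit: "\<forall>w\<in>W. (\<Sum>i\<in>UNIV. x w i * x w i) = 1"
    and edges: "\<forall>i j. E i j \<longrightarrow> (\<Sum>w\<in>W. u w * (x w i * x w j)) = 0"
  defines "B \<equiv> \<lambda>i j. \<Sum>w\<in>W. u w * (x w i * x w j)"
  shows "theta_feasible E B" and "entry_sum B = (\<Sum>w\<in>W. u w * (\<Sum>i\<in>UNIV. x w i)\<^sup>2)"
proof -
  have "quad_form B z = (\<Sum>w\<in>W. u w * (\<Sum>i\<in>UNIV. z i * x w i)\<^sup>2)" for z
    by (simp add: quad_form_def B_def sum_square_eq_double_sum sum_distrib_left
        sum_distrib_right sum.swap[of _ W] algebra_simps)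
  then have "0 \<le> quad_form B z" for z
    using u_nonneg by (auto intro!: sum_nonneg)
  moreover have "(\<Sum>i\<in>UNIV. B i i) = 1"
    using unit u_sum by (simp add: B_def sum.swap[of _ W] flip: sum_distrib_left)
  ultimately show "theta_feasible E B"
    using edges by (simp add: theta_feasible_def B_def mult.commute)
  show "entry_sum B = (\<Sum>w\<in>W. u w * (\<Sum>i\<in>UNIV. x w i)\<^sup>2)"
    by (simp add: entry_sum_def B_def sum.swap[of _ W] sum_square_eq_double_sum
        sum_distrib_left)
qed

text \<open>The moment of a vector records the entries of its rank-one matrix on the
  edges together with its objective value; feasible matrices of the theta program
  are the convex combinations of rank-one matrices of unit vectors.\<close>

definition theta_moment :: "('v::finite \<Rightarrow> 'v \<Rightarrow> bool) \<Rightarrow> real^'v \<Rightarrow> (real^('v \<times> 'v)) \<times> real"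
  where "theta_moment E x =
    (\<chi> p. if E (fst p) (snd p) then x $ fst p * x $ snd p else 0, (\<Sum>i\<in>UNIV. x $ i)\<^sup>2)"

lemma norm_vec_eq_1_iff: "norm (x :: real^'v) = 1 \<longleftrightarrow> (\<Sum>i\<in>UNIV. x $ i * x $ i) = 1"
  by (simp add: norm_vec_def L2_set_def power2_eq_square)

lemma convex_hull_theta_moments_disjoint:
  fixes E :: "'v::finite \<Rightarrow> 'v \<Rightarrow> bool"
  assumes "lovasz_theta E < t"
  shows "convex hull (theta_moment E ` sphere 0 1) \<inter> ({0} \<times> {t..}) = {}"
proof (rule ccontr)
  assume "convex hull (theta_moment E ` sphere 0 1) \<inter> ({0} \<times> {t..}) \<noteq> {}"
  then obtain y where y: "y \<in> convex hull (theta_moment E ` sphere 0 1)"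
    and y_edges: "fst y = 0" and y_obj: "t \<le> snd y"
    by (force simp: mem_Times_iff)
  then obtain W u where W: "finite W" "W \<subseteq> theta_moment E ` sphere 0 1"
    and u: "\<forall>w\<in>W. 0 \<le> u w" "sum u W = 1" and y_eq: "(\<Sum>w\<in>W. u w *\<^sub>R w) = y"
    unfolding convex_hull_explicit by blast
  obtain g where g: "\<And>w. w \<in> W \<Longrightarrow> norm (g w) = 1 \<and> theta_moment E (g w) = w"
    using W(2) by (metis (no_types, lifting) image_iff mem_sphere_0 subset_iff)
  define x where "x w i = g w $ i" for w i
  have moment: "w = theta_moment E (\<chi> i. x w i)" if "w \<in> W" for w
    using g[OF that] by (simp add: x_def)
  have edge_moment: "fst w $ (i, j) = x w i * x w j" if "w \<in> W" "E i j" for w i j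
    by (subst moment[OF that(1)]) (simp add: theta_moment_def that(2))
  have "(\<Sum>w\<in>W. u w * (x w i * x w j)) = fst y $ (i, j)" if "E i j" for i j
    unfolding y_eq[symmetric] fst_sum using that by (simp add: edge_moment)
  then have "theta_feasible E (\<lambda>i j. \<Sum>w\<in>W. u w * (x w i * x w j))"
    and entry: "entry_sum (\<lambda>i j. \<Sum>w\<in>W. u w * (x w i * x w j))
                  = (\<Sum>w\<in>W. u w * (\<Sum>i\<in>UNIV. x w i)\<^sup>2)"
    using theta_feasible_convex_combination[OF W(1) u, of x E] g y_edges
    by (auto simp: x_def norm_vec_eq_1_iff)
  moreover have "(\<Sum>w\<in>W. u w * (\<Sum>i\<in>UNIV. x w i)\<^sup>2) = snd y"
    unfolding y_eq[symmetric] snd_sum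
    by (intro sum.cong refl, subst (2) moment) (simp_all add: theta_moment_def)
  ultimately show False
    using entry_sum_le_lovasz_theta assms y_obj by fastforce
qed

lemma continuous_on_theta_moment:
  fixes E :: "'v::finite \<Rightarrow> 'v \<Rightarrow> bool"
  shows "continuous_on UNIV (theta_moment E)"
  unfolding theta_moment_def
proof (intro continuous_intros)
  fix p :: "'v \<times> 'v"
  show "continuous_on UNIV (\<lambda>x::real^'v. if E (fst p) (snd p) then x $ fst p * x $ snd p else 0)"
    by (cases "E (fst p) (snd p)") (auto intro!: continuous_intros)
qed

lemma inner_theta_moment:
  "inner a (fst (theta_moment E x))
     = quad_form (\<lambda>i j. if E i j then a $ (i, j) else 0) (\<lambda>i. x $ i)"
proof -
  have "inner a (fst (theta_moment E x))
          = (\<Sum>p\<in>UNIV \<times> UNIV. a $ p * (if E (fst p) (snd p) then x $ fst p * x $ snd p else 0))"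
    by (simp add: theta_moment_def inner_vec_def)
  also have "\<dots> = quad_form (\<lambda>i j. if E i j then a $ (i, j) else 0) (\<lambda>i. x $ i)"
    unfolding quad_form_def sum.cartesian_product by (rule sum.cong) auto
  finally show ?thesis .
qed

lemma compact_convex_hull_theta_moments:
  fixes E :: "'v::finite \<Rightarrow> 'v \<Rightarrow> bool"
  shows "compact (convex hull (theta_moment E ` sphere 0 1))"
  by (intro compact_convex_hull compact_continuous_image compact_sphere
      continuous_on_subset[OF continuous_on_theta_moment]) auto

lemma separating_quadratic_form:
  fixes E :: "'v::finite \<Rightarrow> 'v \<Rightarrow> bool"
  assumes irrefl: "\<forall>i. \<not> E i i" and theta_less: "lovasz_theta E < t"
  obtains A where "\<forall>i j. \<not> E i j \<longrightarrow> A i j = 0"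
    and "\<forall>x. (\<Sum>i\<in>UNIV. x i * x i) = 1 \<longrightarrow> quad_form A x + (\<Sum>i\<in>UNIV. x i)\<^sup>2 < t"
proof -
  define K where "K = convex hull (theta_moment E ` sphere 0 1)"
  fix k :: 'v
  have "theta_moment E (axis k 1) = (0, 1)"
    using irrefl by (auto simp: theta_moment_def vec_eq_iff axis_def)
  then have one_in_K: "(0, 1) \<in> K"
    unfolding K_def by (metis hull_inc image_eqI mem_sphere_0 norm_axis_1)
  obtain a b where below: "\<forall>z\<in>K. inner a z < b" and above: "\<forall>z\<in>{0} \<times> {t..}. b < inner a z"
    using separating_hyperplane_compact_closed[of K "{0} \<times> {t..}"]
      compact_convex_hull_theta_moments[of E] convex_hull_theta_moments_disjoint[OF theta_less]
    by (auto simp: K_def convex_Times closed_Times)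
  obtain a1 c where a: "a = (a1, c)" by fastforce
  have "c < b"
    using below one_in_K by (force simp: a)
  have "b < c * t"
    using above by (force simp: a)
  \<comment> \<open>Comparing the point \<open>(0, 1)\<close> of the hull with the point \<open>(0, t)\<close> of the ray,
    where \<open>t > \<vartheta> \<ge> 1\<close>, shows that the hyperplane is not vertical.\<close>
  have "1 < t"
    using lovasz_theta_ge_1[of E, OF irrefl] theta_less by simp
  have "0 < c * (t - 1)"
    using \<open>c < b\<close> \<open>b < c * t\<close> by (simp add: algebra_simps)
  then have c_pos: "0 < c"
    using \<open>1 < t\<close> zero_less_mult_pos2[of c "t - 1"] by simp
  define A where "A i j = (if E i j then a1 $ (i, j) else 0) / c" for i j
  have "quad_form A x + (\<Sum>i\<in>UNIV. x i)\<^sup>2 < t" if unit: "(\<Sum>i\<in>UNIV. x i * x i) = 1" for x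
  proof -
    have "theta_moment E (\<chi> i. x i) \<in> K"
      unfolding K_def using unit by (intro hull_inc) (auto simp: norm_vec_eq_1_iff)
    then have "inner a (theta_moment E (\<chi> i. x i)) < b"
      using below by blast
    then have "inner a1 (fst (theta_moment E (\<chi> i. x i))) + c * (\<Sum>i\<in>UNIV. x i)\<^sup>2 < c * t"
      using \<open>b < c * t\<close> by (simp add: a theta_moment_def)
    moreover have "inner a1 (fst (theta_moment E (\<chi> i. x i))) = c * quad_form A x"
      using c_pos by (simp add: inner_theta_moment A_def quad_form_def sum_distrib_left)
    ultimately show ?thesis
      using c_pos by (simp flip: distrib_left)
  qed
  moreover have "\<forall>i j. \<not> E i j \<longrightarrow> A i j = 0"
    by (simp add: A_def)
  ultimately show ?thesis
    using that by blast
qed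

lemma quadratic_bound_of_unit_bound:
  fixes A :: "'v::finite \<Rightarrow> 'v \<Rightarrow> real"
  assumes unit_bound: "\<forall>x. (\<Sum>i\<in>UNIV. x i * x i) = 1 \<longrightarrow> quad_form A x + (\<Sum>i\<in>UNIV. x i)\<^sup>2 < t"
  shows "quad_form A y + (\<Sum>i\<in>UNIV. y i)\<^sup>2 \<le> t * (\<Sum>i\<in>UNIV. y i * y i)"
proof (cases "y = (\<lambda>_. 0)")
  case True
  then show ?thesis by (simp add: quad_form_def)
next
  case False
  define r where "r = (\<Sum>i\<in>UNIV. y i * y i)"
  have "r \<noteq> 0"
    using False by (auto simp: r_def sum_nonneg_eq_0_iff)
  then have r_pos: "0 < r"
    by (simp add: r_def order_less_le sum_nonneg)
  define c where "c = 1 / sqrt r"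
  have c_sq: "c\<^sup>2 = 1 / r"
    using r_pos by (simp add: c_def power_divide)
  have "(\<Sum>i\<in>UNIV. (c * y i) * (c * y i)) = c\<^sup>2 * r"
    by (simp add: r_def sum_distrib_left power2_eq_square algebra_simps)
  then have "quad_form A (\<lambda>i. c * y i) + (\<Sum>i\<in>UNIV. c * y i)\<^sup>2 < t"
    using unit_bound r_pos c_sq by simp
  then have "(quad_form A y + (\<Sum>i\<in>UNIV. y i)\<^sup>2) / r < t"
    by (simp add: quad_form_scale c_sq power_mult_distrib add_divide_distrib
        flip: sum_distrib_left)
  then show ?thesis
    using r_pos by (simp add: r_def divide_less_eq)
qed

lemma lovasz_theta_dual_certificate:
  fixes E :: "'v::finite \<Rightarrow> 'v \<Rightarrow> bool"
  assumes sym: "\<forall>i j. E i j \<longrightarrow> E j i" and irrefl: "\<forall>i. \<not> E i i"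
    and theta_less: "lovasz_theta E < t"
  obtains A where "\<forall>i j. A i j = A j i" and "\<forall>i j. \<not> E i j \<longrightarrow> A i j = 0"
    and "\<forall>y. quad_form A y + (\<Sum>i\<in>UNIV. y i)\<^sup>2 \<le> t * (\<Sum>i\<in>UNIV. y i * y i)"
proof -
  obtain A0 where support: "\<forall>i j. \<not> E i j \<longrightarrow> A0 i j = 0"
    and bound: "\<forall>x. (\<Sum>i\<in>UNIV. x i * x i) = 1 \<longrightarrow> quad_form A0 x + (\<Sum>i\<in>UNIV. x i)\<^sup>2 < t"
    using separating_quadratic_form[OF irrefl theta_less] by blast
  show ?thesis
  proof (rule that[of "\<lambda>i j. (A0 i j + A0 j i) / 2"])
    show "\<forall>i j. \<not> E i j \<longrightarrow> (A0 i j + A0 j i) / 2 = 0"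
      using sym support by auto
    show "\<forall>y. quad_form (\<lambda>i j. (A0 i j + A0 j i) / 2) y + (\<Sum>i\<in>UNIV. y i)\<^sup>2
            \<le> t * (\<Sum>i\<in>UNIV. y i * y i)"
      using quadratic_bound_of_unit_bound[OF bound] by (simp add: quad_form_symmetrize)
  qed (simp add: add.commute)
qed

subsection \<open>Lov\'asz's product inequality for a graph and its complement\<close>

text \<open>The complement certificate is \<open>(t I - A) / (n t)\<close>: the bound on \<open>A\<close> makes
  it positive semidefinite, its diagonal is \<open>1/n\<close>, and it vanishes on the edges of
  the complement because \<open>A\<close> lives on the edges of the graph.\<close>

lemma lovasz_theta_complement_ge:
  fixes E F :: "'v::finite \<Rightarrow> 'v \<Rightarrow> bool"
  assumes sym: "\<forall>i j. E i j \<longrightarrow> E j i" and irrefl: "\<forall>i. \<not> E i i"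
    and complement: "\<forall>i j. F i j \<longleftrightarrow> i \<noteq> j \<and> \<not> E i j"
    and theta_less: "lovasz_theta E < t"
  shows "real CARD('v) / t \<le> lovasz_theta F"
proof -
  define n where "n = real CARD('v)"
  have n_pos: "0 < n" and t_pos: "0 < t"
    using lovasz_theta_ge_1[of E, OF irrefl] theta_less by (auto simp: n_def)
  obtain A where A_sym: "\<forall>i j. A i j = A j i" and A_support: "\<forall>i j. \<not> E i j \<longrightarrow> A i j = 0"
    and A_bound: "\<forall>y. quad_form A y + (\<Sum>i\<in>UNIV. y i)\<^sup>2 \<le> t * (\<Sum>i\<in>UNIV. y i * y i)"
    using lovasz_theta_dual_certificate[OF sym irrefl theta_less] by blast
  define B where "B i j = ((if i = j then t else 0) - A i j) / (n * t)" for i j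
  have quad_B: "quad_form B y = (t * (\<Sum>i\<in>UNIV. y i * y i) - quad_form A y) / (n * t)" for y
    unfolding B_def[abs_def] by (rule quad_form_identity_minus)
  have "theta_feasible F B"
    unfolding theta_feasible_def
  proof (intro conjI allI impI)
    show "B i j = B j i" for i j
      using A_sym by (simp add: B_def)
    show "0 \<le> quad_form B y" for y
      unfolding quad_B using A_bound[rule_format, of y] n_pos t_pos
      by (intro divide_nonneg_pos) (auto intro: order_trans[OF add_increasing2[OF zero_le_power2]])
    show "(\<Sum>i\<in>UNIV. B i i) = 1"
      using A_support irrefl n_pos t_pos by (simp add: B_def n_def)
    show "F i j \<Longrightarrow> B i j = 0" for i j
      using complement A_support by (simp add: B_def)
  qed
  moreover have "n / t \<le> entry_sum B"
  proof -
    have "quad_form A (\<lambda>_. 1) + n\<^sup>2 \<le> t * n"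
      using A_bound[rule_format, of "\<lambda>_. 1"] by (simp add: n_def)
    then have "n * n \<le> t * n - quad_form A (\<lambda>_. 1)"
      by (simp add: power2_eq_square)
    then have "n * n / (n * t) \<le> entry_sum B"
      unfolding entry_sum_eq_quad_form_ones quad_B using n_pos t_pos
      by (intro divide_right_mono) (auto simp: n_def)
    then show ?thesis
      using n_pos by simp
  qed
  ultimately show ?thesis
    using entry_sum_le_lovasz_theta n_def by fastforce
qed

lemma lovasz_theta_mult_complement_ge:
  fixes E F :: "'v::finite \<Rightarrow> 'v \<Rightarrow> bool"
  assumes sym: "\<forall>i j. E i j \<longrightarrow> E j i" and irrefl: "\<forall>i. \<not> E i i"
    and complement: "\<forall>i j. F i j \<longleftrightarrow> i \<noteq> j \<and> \<not> E i j"
  shows "real CARD('v) \<le> lovasz_theta E * lovasz_theta F"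
proof -
  have F_pos: "0 < lovasz_theta F"
    using lovasz_theta_ge_1[of F] complement by auto
  have "real CARD('v) / lovasz_theta F \<le> t" if "lovasz_theta E < t" for t
    using lovasz_theta_complement_ge[OF sym irrefl complement that] F_pos
      lovasz_theta_ge_1[of E, OF irrefl] that
    by (simp add: field_simps)
  then have "real CARD('v) / lovasz_theta F \<le> lovasz_theta E"
    by (rule dense_ge)
  with F_pos show ?thesis
    by (simp add: divide_le_eq)
qed

lemma rho_lin_mult_complement:
  fixes S :: "'a::{field,finite} set"
  assumes "0 \<notin> S"
  shows "rho_lin S * rho_lin ((UNIV - {0}) - S) = real CARD('a)"
proof -
  define q where "q = real CARD('a)"
  have "card {0::'a, 1} \<le> CARD('a)"
    by (rule card_mono) auto
  then have q_ge_2: "2 \<le> q"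
    by (simp add: q_def)
  have "S \<subseteq> UNIV - {0}"
    using assms by auto
  then have "card S + card ((UNIV - {0}) - S) = card (UNIV - {0::'a})"
    using card_mono[of "UNIV - {0::'a}" S] by (simp add: card_Diff_subset finite_subset)
  then have "real (card S) + real (card ((UNIV - {0}) - S)) = q - 1"
    using q_ge_2 by (simp add: q_def card_Diff_singleton of_nat_diff flip: of_nat_add)
  then have "real (card S) / (q - 1) + real (card ((UNIV - {0}) - S)) / (q - 1) = 1"
    using q_ge_2 by (simp flip: add_divide_distrib)
  then have exponent_sum:
    "(1 - real (card S) / (q - 1)) + (1 - real (card ((UNIV - {0}) - S)) / (q - 1)) = 1"
    by linarith
  have "rho_lin S * rho_lin ((UNIV - {0}) - S)
          = q powr ((1 - real (card S) / (q - 1)) + (1 - real (card ((UNIV - {0}) - S)) / (q - 1)))"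
    unfolding rho_lin_def q_def by (rule powr_add[symmetric])
  also have "\<dots> = q"
    using q_ge_2 by (simp only: exponent_sum powr_one)
  finally show ?thesis
    by (simp add: q_def)
qed

lemma eq_xor_less_of_mult_le:
  fixes a b x y :: real
  assumes "0 < a" "0 < y" "a * b \<le> x * y"
  shows "(a = x \<and> b = y) \<noteq> (a < x \<or> b < y)"
proof (cases "a < x \<or> b < y")
  case False
  then have "x * y \<le> a * y" "a * y \<le> a * b"
    using assms by (auto intro: mult_right_mono mult_left_mono)
  with assms have "a * y = a * b" "x * y = a * y"
    by linarith+
  with assms show ?thesis
    by auto
qed auto

theorem corollary1:
  fixes S :: "'a::{field,finite} set"
  assumes "0 \<notin> S"
    and "\<forall>x\<in>S. - x \<in> S"
  defines "Sc \<equiv> (UNIV - {0}) - S"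
  shows "(rho_lin S = lovasz_theta (cayley_adj S) \<and> rho_lin Sc = lovasz_theta (cayley_adj Sc))
         \<noteq> (rho_lin S < lovasz_theta (cayley_adj S) \<or> rho_lin Sc < lovasz_theta (cayley_adj Sc))"
proof (rule eq_xor_less_of_mult_le)
  have "CARD('a) \<ge> 1"
    by (simp add: Suc_leI)
  then show "0 < rho_lin S"
    by (simp add: rho_lin_def)
  have irrefl: "\<forall>i. \<not> cayley_adj S i i"
    using assms(1) by (simp add: cayley_adj_def)
  have sym: "\<forall>i j. cayley_adj S i j \<longrightarrow> cayley_adj S j i"
    using assms(2) by (metis cayley_adj_def minus_diff_eq)
  have complement: "\<forall>i j. cayley_adj Sc i j \<longleftrightarrow> i \<noteq> j \<and> \<not> cayley_adj S i j"
    by (auto simp: cayley_adj_def Sc_def)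
  show "0 < lovasz_theta (cayley_adj Sc)"
    using lovasz_theta_ge_1[of "cayley_adj Sc"] complement by auto
  show "rho_lin S * rho_lin Sc \<le> lovasz_theta (cayley_adj S) * lovasz_theta (cayley_adj Sc)"
    using rho_lin_mult_complement[OF assms(1)]
      lovasz_theta_mult_complement_ge[OF sym irrefl complement]
    by (simp add: Sc_def)
qed

end
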